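(* Let $G\le\mathrm{Aff}(n)$ be a subgroup acting transitively on $\mathbb{R}^n$. Then the centraliser of $G$ in $\mathrm{Aff}(n)$ is a connected unipotent group of dimension at most $n$.
   Context: $\mathrm{Aff}(n)$ is the affine group of $\mathbb{R}^n$, identified with matrices $\begin{pmatrix} g&t\\0&1\end{pmatrix}\in GL(n+1,\mathbb{R})$; a subgroup is unipotent if all its elements are unipotent matrices. *)

theory Defs
  imports "HOL-Analysis.Analysis"
begin

text \<open>Matrices over the index type 'm (in the application 'm = 'n option, i.e. n+1 indices,
  where the extra index None is the homogeneous coordinate). Note that the operator
  times on real^'m^'m is componentwise, so matrix powers and the matrix exponential
  are defined explicitly via the matrix product.\<close>

definition matpow :: "real^'m^'m \<Rightarrow> nat \<Rightarrow> real^'m^'m" where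
  "matpow A k = ((\<lambda>X. A ** X) ^^ k) (mat 1)"

definition mexp :: "real^'m^'m \<Rightarrow> real^'m^'m" where
  "mexp A = (\<Sum>k. (1 / fact k) *\<^sub>R matpow A k)"

definition unipotent_mat :: "real^'m^'m \<Rightarrow> bool" where
  "unipotent_mat A \<longleftrightarrow> (\<exists>N. matpow (A - mat 1) N = 0)"

definition unipotent_group :: "(real^'m^'m) set \<Rightarrow> bool" where
  "unipotent_group H \<longleftrightarrow> (\<forall>A\<in>H. unipotent_mat A)"

definition matrix_subgroup :: "(real^'m^'m) set \<Rightarrow> bool" where
  "matrix_subgroup H \<longleftrightarrow> (\<forall>A\<in>H. invertible A) \<and> mat 1 \<in> H \<and>
     (\<forall>A\<in>H. \<forall>B\<in>H. A ** B \<in> H) \<and> (\<forall>A\<in>H. matrix_inv A \<in> H)"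

definition lie_algebra :: "(real^'m^'m) set \<Rightarrow> (real^'m^'m) set" where
  "lie_algebra H = {X. \<forall>t::real. mexp (t *\<^sub>R X) \<in> H}"

definition lie_dim :: "(real^'m^'m) set \<Rightarrow> nat" where
  "lie_dim H = dim (lie_algebra H)"

text \<open>The affine group Aff(n) as matrices [[g, t],[0, 1]] in GL(n+1,R),
  indices 'n option with None the last (homogeneous) coordinate.\<close>
definition Aff :: "(real^('n::finite option)^('n option)) set" where
  "Aff = {M. invertible M \<and> (\<forall>j. M $ None $ Some j = 0) \<and> M $ None $ None = 1}"

definition hom_embed :: "real^'n \<Rightarrow> real^('n::finite option)" where
  "hom_embed x = (\<chi> k. case k of None \<Rightarrow> 1 | Some i \<Rightarrow> x $ i)"

definition aff_act :: "real^('n::finite option)^('n option) \<Rightarrow> real^'n \<Rightarrow> real^'n" where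
  "aff_act M x = (\<chi> i. (M *v hom_embed x) $ Some i)"

definition transitive_on_Rn :: "(real^('n::finite option)^('n option)) set \<Rightarrow> bool" where
  "transitive_on_Rn G \<longleftrightarrow> (\<forall>x y::real^'n. \<exists>g\<in>G. aff_act g x = y)"

definition aff_centraliser :: "(real^('n::finite option)^('n option)) set \<Rightarrow> (real^('n option)^('n option)) set" where
  "aff_centraliser G = {h \<in> Aff. \<forall>g\<in>G. h ** g = g ** h}"

end

theory Submission
  imports Defs
begin

(* Write L(G) for the linear space of (n+1)x(n+1) matrices that commute with every
   element of G and whose bottom (homogeneous) row vanishes.  The whole proof rests on
   one observation: if G is transitive on R^n and X commutes with G, then X is
   determined by its value on a single point hom_embed x, because G moves that point to
   every other point and the points hom_embed y span R^(n+1).  Consequences: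
   (1) every X in L(G) is nilpotent (the images of the powers of X stabilise, which
       produces a point killed by some power of X);
   (2) the centraliser of G in Aff(n) is exactly the affine space mat 1 + L(G), hence a
       convex (so connected) group of unipotent matrices;
   (3) X |-> X *v e_None is injective on L(G) with values in a hyperplane, so
       dim L(G) <= n;
   (4) the Lie algebra of the centraliser lies in L(G), since it consists of the
       derivatives at 0 of curves t |-> mexp (t X) inside mat 1 + L(G). *)

lemma matpow_0 [simp]: "matpow A 0 = mat 1"
  by (simp add: matpow_def)

lemma matpow_Suc: "matpow A (Suc k) = A ** matpow A k"
  by (simp add: matpow_def)

lemma matpow_commute_with:
  fixes A B :: "real^'m^'m"
  assumes "A ** B = B ** A"
  shows "matpow A k ** B = B ** matpow A k"
proof (induction k)
  case 0
  then show ?case by simp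
next
  case (Suc k)
  have "matpow A (Suc k) ** B = A ** (matpow A k ** B)"
    by (simp add: matpow_Suc matrix_mul_assoc)
  also have "\<dots> = (A ** B) ** matpow A k"
    using Suc by (simp add: matrix_mul_assoc)
  also have "\<dots> = B ** matpow A (Suc k)"
    using assms by (simp add: matpow_Suc matrix_mul_assoc)
  finally show ?case .
qed

lemma matpow_Suc': "matpow A (Suc k) = matpow A k ** A"
  for A :: "real^'m^'m"
  using matpow_commute_with[of A A k] by (simp add: matpow_Suc)

lemma matpow_scaleR: "matpow (t *\<^sub>R A) k = (t ^ k) *\<^sub>R matpow A k"
  for A :: "real^'m^'m"
  by (induction k) (simp_all add: matpow_Suc matrix_scalar_ac scalar_matrix_assoc[symmetric])

lemma matrix_add_rdistrib: "(A + B) ** C = A ** C + B ** C"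
  for A B :: "real^'k^'m" and C :: "real^'l^'k"
  by (vector matrix_matrix_mult_def sum.distrib distrib_right)

lemma matrix_diff_rdistrib: "(A - B) ** C = A ** C - B ** C"
  for A B :: "real^'k^'m" and C :: "real^'l^'k"
  by (vector matrix_matrix_mult_def sum_subtractf left_diff_distrib)

lemma matrix_diff_ldistrib: "C ** (A - B) = C ** A - C ** B"
  for A B :: "real^'l^'k" and C :: "real^'k^'m"
  by (vector matrix_matrix_mult_def sum_subtractf right_diff_distrib)

(* Unipotent matrices are invertible: h v = 0 forces (h - 1) v = -v, and a nilpotent
   matrix has no eigenvalue -1. *)
lemma unipotent_invertible:
  fixes h :: "real^'m^'m"
  assumes nil: "matpow (h - mat 1) N = 0"
  shows "invertible h"
proof -
  have "v = 0" if hv: "h *v v = 0" for v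
  proof -
    have step: "(h - mat 1) *v v = - v"
      using hv by (simp add: matrix_vector_mult_diff_rdistrib)
    have "matpow (h - mat 1) k *v v = (-1) ^ k *\<^sub>R v" for k
    proof (induction k)
      case 0
      then show ?case by simp
    next
      case (Suc k)
      have "matpow (h - mat 1) (Suc k) *v v = matpow (h - mat 1) k *v ((h - mat 1) *v v)"
        by (simp add: matpow_Suc' matrix_vector_mul_assoc)
      also have "\<dots> = - (matpow (h - mat 1) k *v v)"
        by (simp add: step linear_neg[OF matrix_vector_mul_linear])
      finally show ?case
        using Suc by simp
    qed
    from this[of N] nil show "v = 0" by simp
  qed
  then show ?thesis
    by (simp add: invertible_left_inverse matrix_left_invertible_ker)
qed

(* The ranges of the powers of a square matrix form a decreasing chain of subspaces of
   a finite-dimensional space, so they stabilise. *)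
lemma matpow_range_stabilises:
  fixes M :: "real^'m^'m"
  shows "\<exists>k. range ((*v) (matpow M (Suc k))) = range ((*v) (matpow M k))"
proof (rule ccontr)
  define R where "R k = range ((*v) (matpow M k))" for k
  assume "\<not> ?thesis"
  then have neq: "R (Suc k) \<noteq> R k" for k
    by (simp add: R_def)
  have sub: "subspace (R k)" for k
    unfolding R_def by (rule linear_subspace_image[OF matrix_vector_mul_linear subspace_UNIV])
  have dec: "R (Suc k) \<subseteq> R k" for k
    by (auto simp: R_def matpow_Suc' matrix_vector_mul_assoc[symmetric])
  have lt: "dim (R (Suc k)) < dim (R k)" for k
  proof -
    have "\<not> dim (R k) \<le> dim (R (Suc k))"
      using subspace_dim_equal[OF sub sub dec] neq by blast
    then show ?thesis by linarith
  qed
  have "dim (R k) + k \<le> dim (R 0)" for k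
  proof (induction k)
    case 0
    then show ?case by simp
  next
    case (Suc k)
    then show ?case
      using lt[of k] by simp
  qed
  from this[of "Suc (dim (R 0))"] show False by simp
qed

(* Each entry of mexp (t X) is a power series in t whose
   coefficients are bounded by c^k / k!, where c is the sum of the absolute entries
   of X; this yields summability and the derivative at t = 0. *)

lemma matpow_entry_bound:
  fixes X :: "real^'m^'m"
  shows "\<bar>matpow X k $ i $ j\<bar> \<le> (\<Sum>i\<in>UNIV. \<Sum>j\<in>UNIV. \<bar>X $ i $ j\<bar>) ^ k"
proof (induction k arbitrary: i j)
  case 0
  then show ?case by (simp add: mat_def)
next
  case (Suc k)
  define c where "c = (\<Sum>i\<in>UNIV. \<Sum>j\<in>UNIV. \<bar>X $ i $ j\<bar>)"
  have row: "(\<Sum>l\<in>UNIV. \<bar>X $ i $ l\<bar>) \<le> c"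
    unfolding c_def by (rule member_le_sum) (auto intro: sum_nonneg)
  have "\<bar>matpow X (Suc k) $ i $ j\<bar> = \<bar>\<Sum>l\<in>UNIV. X $ i $ l * matpow X k $ l $ j\<bar>"
    by (simp add: matpow_Suc matrix_matrix_mult_def)
  also have "\<dots> \<le> (\<Sum>l\<in>UNIV. \<bar>X $ i $ l\<bar> * \<bar>matpow X k $ l $ j\<bar>)"
    by (rule order_trans[OF sum_abs]) (simp add: abs_mult)
  also have "\<dots> \<le> (\<Sum>l\<in>UNIV. \<bar>X $ i $ l\<bar> * c ^ k)"
    by (rule sum_mono, rule mult_left_mono) (use Suc in \<open>auto simp: c_def\<close>)
  also have "\<dots> = (\<Sum>l\<in>UNIV. \<bar>X $ i $ l\<bar>) * c ^ k"
    by (simp add: sum_distrib_right)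
  also have "\<dots> \<le> c * c ^ k"
    by (rule mult_right_mono[OF row]) (simp add: c_def sum_nonneg)
  finally show ?case by (simp add: c_def)
qed

lemma sums_vec_componentwise:
  fixes f :: "nat \<Rightarrow> 'a::real_normed_vector ^ 'n"
  assumes "\<And>i. (\<lambda>k. f k $ i) sums (s $ i)"
  shows "f sums s"
  unfolding sums_def
proof (rule vec_tendstoI)
  fix i
  show "((\<lambda>n. sum f {..<n} $ i) \<longlongrightarrow> s $ i) sequentially"
    using assms[of i] by (simp add: sums_def)
qed

definition mexp_coeff :: "real^'m^'m \<Rightarrow> 'm \<Rightarrow> 'm \<Rightarrow> nat \<Rightarrow> real" where
  "mexp_coeff X i j k = matpow X k $ i $ j / fact k"

lemma mexp_coeff_summable: "summable (\<lambda>k. mexp_coeff X i j k * t ^ k)"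
proof (rule summable_comparison_test')
  define c where "c = (\<Sum>i\<in>UNIV. \<Sum>j\<in>UNIV. \<bar>X $ i $ j\<bar>)"
  show "summable (\<lambda>k. inverse (fact k) * (\<bar>t\<bar> * c) ^ k)"
    by (rule summable_exp)
  fix k
  have "\<bar>matpow X k $ i $ j\<bar> * \<bar>t\<bar> ^ k \<le> c ^ k * \<bar>t\<bar> ^ k"
    unfolding c_def by (intro mult_right_mono matpow_entry_bound) simp
  then show "norm (mexp_coeff X i j k * t ^ k) \<le> inverse (fact k) * (\<bar>t\<bar> * c) ^ k"
    by (simp add: mexp_coeff_def abs_mult power_abs divide_inverse power_mult_distrib
        mult_left_mono mult_ac)
qed

lemma mexp_entry: "mexp (t *\<^sub>R X) $ i $ j = (\<Sum>k. mexp_coeff X i j k * t ^ k)"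
proof -
  define S where "S = (\<chi> i j. \<Sum>k. mexp_coeff X i j k * t ^ k)"
  have entry: "((1 / fact k) *\<^sub>R matpow (t *\<^sub>R X) k) $ i $ j = mexp_coeff X i j k * t ^ k"
    for k i j
    by (simp add: mexp_coeff_def matpow_scaleR)
  have "(\<lambda>k. (1 / fact k) *\<^sub>R matpow (t *\<^sub>R X) k) sums S"
    by (intro sums_vec_componentwise)
       (simp only: entry S_def vec_lambda_beta, rule summable_sums[OF mexp_coeff_summable])
  then show ?thesis
    by (simp add: mexp_def sums_unique[symmetric] S_def)
qed

lemma mexp_difference_quotient:
  fixes X :: "real^'m^'m"
  shows "((\<lambda>t. (1 / t) *\<^sub>R (mexp (t *\<^sub>R X) - mat 1)) \<longlongrightarrow> X) (at 0)"
proof (rule vec_tendstoI, rule vec_tendstoI)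
  fix i j
  let ?f = "\<lambda>t. \<Sum>k. mexp_coeff X i j k * t ^ k"
  have "(?f has_field_derivative (\<Sum>k. diffs (mexp_coeff X i j) k * 0 ^ k)) (at 0)"
    by (rule termdiffs_strong_converges_everywhere[OF mexp_coeff_summable])
  moreover have "(\<Sum>k. diffs (mexp_coeff X i j) k * 0 ^ k) = X $ i $ j"
    by (subst powser_zero) (simp add: diffs_def mexp_coeff_def matpow_Suc)
  moreover have "?f 0 = mat 1 $ i $ j"
    unfolding powser_zero by (simp add: mexp_coeff_def)
  ultimately have "((\<lambda>t. (?f t - mat 1 $ i $ j) / t) \<longlongrightarrow> X $ i $ j) (at 0)"
    by (simp add: DERIV_def)
  then show "((\<lambda>t. ((1 / t) *\<^sub>R (mexp (t *\<^sub>R X) - mat 1)) $ i $ j) \<longlongrightarrow> X $ i $ j) (at 0)"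
    by (simp add: mexp_entry divide_inverse mult.commute)
qed

lemma Aff_bottom_row: "g \<in> Aff \<Longrightarrow> g $ None $ j = mat 1 $ None $ j"
  by (cases j) (auto simp: Aff_def mat_def)

lemma bottom_row_mult:
  fixes X Y :: "real^('n::finite option)^('n option)"
  shows "(X ** Y) $ None $ j = (\<Sum>l\<in>UNIV. X $ None $ l * Y $ l $ j)"
  by (simp add: matrix_matrix_mult_def)

lemma Aff_mult_hom_embed:
  assumes "g \<in> Aff"
  shows "g *v hom_embed x = hom_embed (aff_act g x)"
proof -
  have unit: "g $ None $ l = (if l = None then 1 else 0)" for l
    using Aff_bottom_row[OF assms, of l] by (simp add: mat_def eq_commute)
  have "(g *v hom_embed x) $ None = hom_embed x $ None"
    by (simp add: matrix_vector_mult_def unit if_distrib if_distribR cong: if_cong)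
  then show ?thesis
    by (auto simp: vec_eq_iff hom_embed_def aff_act_def split: option.splits)
qed

(* Indeed it then vanishes
   at every hom_embed y = g (hom_embed x), and these vectors span R^(n+1). *)
lemma commuting_vanishing_at_point:
  fixes X :: "real^('n::finite option)^('n option)"
  assumes G: "G \<subseteq> Aff" "transitive_on_Rn G"
    and comm: "\<forall>g\<in>G. X ** g = g ** X"
    and x: "X *v hom_embed x = 0"
  shows "X = 0"
proof -
  have all: "X *v hom_embed y = 0" for y
  proof -
    obtain g where g: "g \<in> G" "aff_act g x = y"
      using G(2) unfolding transitive_on_Rn_def by blast
    have "X *v hom_embed y = X *v (g *v hom_embed x)"
      using Aff_mult_hom_embed[of g x] g G(1) by auto
    also have "\<dots> = (X ** g) *v hom_embed x"
      by (simp add: matrix_vector_mul_assoc)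
    also have "\<dots> = g *v (X *v hom_embed x)"
      using comm g by (simp add: matrix_vector_mul_assoc)
    finally show ?thesis
      using x by simp
  qed
  have "axis k 1 = (case k of None \<Rightarrow> hom_embed 0 | Some i \<Rightarrow> hom_embed (axis i 1) - hom_embed 0)"
    for k :: "'n option"
    by (auto simp: vec_eq_iff hom_embed_def axis_def split: option.splits)
  then have "X *v axis k 1 = 0" for k
    using all by (cases k) (simp_all add: matrix_vector_mult_diff_distrib)
  then show ?thesis
    by (simp add: vec_eq_iff matrix_vector_mult_basis column_def)
qed

(* L(G): matrices commuting with G whose bottom row vanishes.  The centraliser will
   turn out to be exactly mat 1 + L(G). *)
definition aff_commutant :: "(real^('n::finite option)^('n option)) set \<Rightarrow> (real^('n option)^('n option)) set" where
  "aff_commutant G = {X. (\<forall>g\<in>G. X ** g = g ** X) \<and> (\<forall>j. X $ None $ j = 0)}"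

lemma subspace_aff_commutant: "subspace (aff_commutant G)"
  unfolding subspace_def aff_commutant_def
  by (simp add: matrix_add_rdistrib matrix_add_ldistrib scalar_matrix_assoc[symmetric]
      matrix_scalar_ac)

lemma aff_commutant_mult:
  assumes X: "X \<in> aff_commutant G" and Y: "\<forall>g\<in>G. Y ** g = g ** Y"
  shows "X ** Y \<in> aff_commutant G"
proof -
  have "(X ** Y) ** g = g ** (X ** Y)" if g: "g \<in> G" for g
  proof -
    have "(X ** Y) ** g = X ** (Y ** g)"
      by (simp add: matrix_mul_assoc)
    also have "\<dots> = (X ** g) ** Y"
      using Y g by (simp add: matrix_mul_assoc)
    also have "\<dots> = g ** (X ** Y)"
      using X g by (simp add: aff_commutant_def matrix_mul_assoc)
    finally show ?thesis .
  qed
  then show ?thesis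
    using X by (simp add: aff_commutant_def bottom_row_mult)
qed

(* Once ran X^(k+1) = ran X^k, write
   X^k e_None = X^(k+1) v; then X^k kills e_None - X v, which has last coordinate 1
   (X has zero bottom row), so X^k = 0 by the key lemma. *)
lemma aff_commutant_nilpotent:
  assumes G: "G \<subseteq> Aff" "transitive_on_Rn G" and X: "X \<in> aff_commutant G"
  shows "\<exists>N. matpow X N = 0"
proof -
  obtain k where k: "range ((*v) (matpow X (Suc k))) = range ((*v) (matpow X k))"
    using matpow_range_stabilises by blast
  then obtain v where v: "matpow X k *v axis None 1 = matpow X (Suc k) *v v"
    by (metis rangeE rangeI)
  define w where "w = axis None 1 - X *v v"
  have "(X *v v) $ None = 0"
    using X by (simp add: aff_commutant_def matrix_vector_mult_def)
  then have "w = hom_embed (\<chi> i. w $ Some i)"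
    by (auto simp: w_def vec_eq_iff hom_embed_def axis_def split: option.splits)
  moreover have "matpow X k *v w = 0"
    by (simp add: w_def matrix_vector_mult_diff_distrib v matpow_Suc' matrix_vector_mul_assoc)
  moreover have "\<forall>g\<in>G. matpow X k ** g = g ** matpow X k"
    using X by (simp add: aff_commutant_def matpow_commute_with)
  ultimately have "matpow X k = 0"
    using commuting_vanishing_at_point[OF G] by metis
  then show ?thesis ..
qed

(* The centraliser of G in Aff(n) is exactly mat 1 + L(G); invertibility of
   mat 1 + X comes from the nilpotency of X. *)
lemma aff_centraliser_iff:
  assumes G: "G \<subseteq> Aff" "transitive_on_Rn G"
  shows "h \<in> aff_centraliser G \<longleftrightarrow> h - mat 1 \<in> aff_commutant G"
proof
  assume "h \<in> aff_centraliser G"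
  then show "h - mat 1 \<in> aff_commutant G"
    by (auto simp: aff_centraliser_def aff_commutant_def Aff_bottom_row
        matrix_diff_rdistrib matrix_diff_ldistrib)
next
  assume h: "h - mat 1 \<in> aff_commutant G"
  then have "invertible h"
    using aff_commutant_nilpotent[OF G] unipotent_invertible by blast
  moreover have "h ** g = g ** h" if "g \<in> G" for g
    using h that by (simp add: aff_commutant_def matrix_diff_rdistrib matrix_diff_ldistrib)
  moreover have "h $ None $ j = mat 1 $ None $ j" for j
    using h by (simp add: aff_commutant_def)
  ultimately show "h \<in> aff_centraliser G"
    by (auto simp: aff_centraliser_def Aff_def mat_def)
qed

lemma aff_centraliser_translate:
  assumes G: "G \<subseteq> Aff" "transitive_on_Rn G"
  shows "aff_centraliser G = (+) (mat 1) ` aff_commutant G"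
proof -
  have "h \<in> aff_centraliser G \<longleftrightarrow> h \<in> (+) (mat 1) ` aff_commutant G" for h
    unfolding aff_centraliser_iff[OF G] by (auto intro: image_eqI[of _ _ "h - mat 1"])
  then show ?thesis by blast
qed

(* Closure under products and inverses, via L(G): for h = 1 + X and h' = 1 + Y,
   h h' - 1 = X Y + X + Y, and h^-1 - 1 = -X h^-1 where h^-1 commutes with G. *)
lemma aff_centraliser_subgroup:
  assumes G: "G \<subseteq> Aff" "transitive_on_Rn G"
  shows "matrix_subgroup (aff_centraliser G)"
proof -
  note iff = aff_centraliser_iff[OF G]
  have mult: "h ** h' \<in> aff_centraliser G"
    if "h \<in> aff_centraliser G" "h' \<in> aff_centraliser G" for h h'
  proof -
    let ?X = "h - mat 1" and ?Y = "h' - mat 1"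
    have "?X ** ?Y + ?X + ?Y \<in> aff_commutant G"
    proof -
      have "?X \<in> aff_commutant G" "?Y \<in> aff_commutant G"
        using that iff by auto
      then have "?X ** ?Y \<in> aff_commutant G"
        by (intro aff_commutant_mult) (simp_all add: aff_commutant_def)
      then show ?thesis
        using \<open>?X \<in> aff_commutant G\<close> \<open>?Y \<in> aff_commutant G\<close>
        by (intro subspace_add[OF subspace_aff_commutant])
    qed
    moreover have "h ** h' - mat 1 = ?X ** ?Y + ?X + ?Y"
      by (simp add: matrix_diff_rdistrib matrix_diff_ldistrib)
    ultimately show ?thesis
      unfolding iff by metis
  qed
  have inv: "matrix_inv h \<in> aff_centraliser G" if h: "h \<in> aff_centraliser G" for h
  proof -
    let ?X = "h - mat 1" and ?h' = "matrix_inv h"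
    have "invertible h"
      using h by (simp add: aff_centraliser_def Aff_def)
    then have hh': "h ** ?h' = mat 1" "?h' ** h = mat 1"
      unfolding matrix_inv_def invertible_def by (metis (mono_tags, lifting) someI_ex)+
    have "?h' ** g = g ** ?h'" if "g \<in> G" for g
    proof -
      have "?h' ** g = ?h' ** g ** (h ** ?h')"
        using hh' by simp
      also have "\<dots> = ?h' ** (g ** h) ** ?h'"
        by (simp add: matrix_mul_assoc)
      also have "\<dots> = ?h' ** (h ** g) ** ?h'"
        using h that by (simp add: aff_centraliser_def)
      also have "\<dots> = g ** ?h'"
        using hh' by (simp add: matrix_mul_assoc)
      finally show ?thesis .
    qed
    then have "?X ** ?h' \<in> aff_commutant G"
      using h iff by (intro aff_commutant_mult) auto
    moreover have "?h' - mat 1 = - (?X ** ?h')"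
      using hh' by (simp add: matrix_diff_rdistrib)
    ultimately show ?thesis
      using iff subspace_neg[OF subspace_aff_commutant] by metis
  qed
  show ?thesis
    unfolding matrix_subgroup_def
    using mult inv iff subspace_0[OF subspace_aff_commutant]
    by (auto simp: aff_centraliser_def Aff_def)
qed

(* dim L(G) <= n: evaluation at e_None = hom_embed 0 is injective on L(G) by the key
   lemma, and lands in the hyperplane of vectors with vanishing last coordinate. *)
lemma dim_aff_commutant:
  fixes G :: "(real^('n::finite option)^('n option)) set"
  assumes G: "G \<subseteq> Aff" "transitive_on_Rn G"
  shows "dim (aff_commutant G) \<le> CARD('n)"
proof -
  let ?L = "aff_commutant G" and ?e = "axis None (1::real) :: real^'n option"
  define T where "T X = X *v ?e" for X :: "real^('n option)^('n option)"
  have lin: "linear T"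
    by (rule linearI) (simp_all add: T_def matrix_vector_mult_add_rdistrib
        scaleR_matrix_vector_assoc)
  have e: "?e = hom_embed 0"
    by (auto simp: vec_eq_iff hom_embed_def axis_def split: option.splits)
  have "inj_on T ?L"
  proof (rule inj_onI)
    fix X Y
    assume XY: "X \<in> ?L" "Y \<in> ?L" "T X = T Y"
    then have "X - Y \<in> ?L"
      using subspace_diff[OF subspace_aff_commutant] by blast
    moreover have "(X - Y) *v hom_embed 0 = 0"
      using XY(3) e by (simp add: T_def matrix_vector_mult_diff_rdistrib)
    ultimately have "X - Y = 0"
      using commuting_vanishing_at_point[OF G, of "X - Y"] by (simp add: aff_commutant_def)
    then show "X = Y" by simp
  qed
  then have "dim ?L = dim (T ` ?L)"
    using dim_image_eq[OF lin] subspace_aff_commutant by (metis span_eq_iff)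
  also have "\<dots> \<le> dim {v. ?e \<bullet> v = 0}"
    by (rule dim_subset)
       (auto simp: T_def aff_commutant_def inner_axis' matrix_vector_mult_def)
  also have "\<dots> = CARD('n)"
    by (simp add: dim_hyperplane card_UNIV_option)
  finally show ?thesis .
qed

(* The Lie algebra of the centraliser lies in L(G): for X in it, the difference
   quotients (mexp (t X) - 1) / t lie in the closed subspace L(G) and tend to X. *)
lemma lie_algebra_aff_centraliser:
  assumes G: "G \<subseteq> Aff" "transitive_on_Rn G"
  shows "lie_algebra (aff_centraliser G) \<subseteq> aff_commutant G"
proof
  fix X
  assume "X \<in> lie_algebra (aff_centraliser G)"
  then have "mexp (t *\<^sub>R X) - mat 1 \<in> aff_commutant G" for t
    by (simp add: lie_algebra_def aff_centraliser_iff[OF G])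
  then have "eventually (\<lambda>t. (1 / t) *\<^sub>R (mexp (t *\<^sub>R X) - mat 1) \<in> aff_commutant G) (at 0)"
    by (simp add: subspace_scale[OF subspace_aff_commutant])
  then show "X \<in> aff_commutant G"
    by (rule Lim_in_closed_set[OF closed_subspace[OF subspace_aff_commutant] _ _
          mexp_difference_quotient]) simp
qed

theorem mainTheorem19:
  fixes G :: "(real^('n::finite option)^('n option)) set"
  assumes "matrix_subgroup G" and "G \<subseteq> Aff"
    and "transitive_on_Rn G"
  shows "matrix_subgroup (aff_centraliser G) \<and> connected (aff_centraliser G)
    \<and> unipotent_group (aff_centraliser G) \<and> lie_dim (aff_centraliser G) \<le> CARD('n)"
proof (intro conjI)
  have G: "G \<subseteq> Aff" "transitive_on_Rn G"
    using assms by auto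
  show "matrix_subgroup (aff_centraliser G)"
    by (rule aff_centraliser_subgroup[OF G])
  show "connected (aff_centraliser G)"
    unfolding aff_centraliser_translate[OF G]
    by (intro convex_connected convex_translation subspace_imp_convex subspace_aff_commutant)
  show "unipotent_group (aff_centraliser G)"
    unfolding unipotent_group_def unipotent_mat_def
    using aff_commutant_nilpotent[OF G] aff_centraliser_iff[OF G] by blast
  have "lie_dim (aff_centraliser G) \<le> dim (aff_commutant G)"
    unfolding lie_dim_def by (rule dim_subset[OF lie_algebra_aff_centraliser[OF G]])
  also have "\<dots> \<le> CARD('n)"
    by (rule dim_aff_commutant[OF G])
  finally show "lie_dim (aff_centraliser G) \<le> CARD('n)" .
qed

end
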